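(* Let $s,t$ be real numbers with $t\ge s>0$, let $n\ge 3$, and let $A=(a_{ij}) \in \mathcal{G}_s^{n\times n}([0,t])$. Then for every $k\in\{2,3,\dots,n-1\}$, $$\Big| (a_{11}a_{2k} - s\,a_{1k})\,H_{k+1}(A) - (a_{11}a_{2,k+1} - s\,a_{1,k+1})\, s\, H_{k+2}(A)\Big| \le t^2 M_{n-k} + t s^2 M_{n-k-1},$$ and, if $n$ is even, $$\big| (a_{11}a_{2n} - s\,a_{1n})\,H_{n+1}(A)\big| \le t^2 M_0.$$
   Context: For a real number $s$, a positive integer $n$ and a set $P \subseteq \mathbb{R}$, $\mathcal{G}_s^{n\times n}(P)$ denotes the set of all $n\times n$ real upper Hessenberg matrices $A=(a_{ij})$ with $a_{i+1,i} = s$ for $1\le i\le n-1$, $a_{ij}=0$ for $i > j+1$, and $a_{ij}\in P$ for all $i \le j$. For $m\ge 1$, $M_m$ is the maximum of $|\det B|$ over $B\in\mathcal{G}_s^{m\times m}([0,t])$, and $M_0 := 1$. For an $n\times n$ matrix $A$ and $1\le k\le n$, $H_k(A)$ is the determinant of the bottom-right $(n+1-k)\times(n+1-k)$ submatrix of $A$ (rows and columns $k,\dots,n$), and $H_{n+1}(A):=1$. *)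

theory Defs
  imports Complex_Main "Jordan_Normal_Form.Determinant"
begin

(* Matrices of varying size are functions nat => nat => real, indexed from 1. *)

definition detn :: "nat \<Rightarrow> (nat \<Rightarrow> nat \<Rightarrow> real) \<Rightarrow> real" where
  "detn m B = det (mat m m (\<lambda>(i, j). B (i + 1) (j + 1)))"

definition hessG :: "real \<Rightarrow> nat \<Rightarrow> real set \<Rightarrow> (nat \<Rightarrow> nat \<Rightarrow> real) \<Rightarrow> bool" where
  "hessG s n P A \<longleftrightarrow>
     (\<forall>i\<in>{1..n}. \<forall>j\<in>{1..n}.
        (i = j + 1 \<longrightarrow> A i j = s) \<and> (i > j + 1 \<longrightarrow> A i j = 0) \<and> (i \<le> j \<longrightarrow> A i j \<in> P))"

definition Mmax :: "real \<Rightarrow> real \<Rightarrow> nat \<Rightarrow> real" where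
  "Mmax s t m = (if m = 0 then 1 else Sup {\<bar>detn m B\<bar> | B. hessG s m {0..t} B})"

definition Hk :: "nat \<Rightarrow> (nat \<Rightarrow> nat \<Rightarrow> real) \<Rightarrow> nat \<Rightarrow> real" where
  "Hk n A k = (if k = n + 1 then 1 else detn (n + 1 - k) (\<lambda>i j. A (i + k - 1) (j + k - 1)))"

end

theory Submission
  imports Defs
begin

(* Write X_j = a_11 a_2j - s a_1j, which lies in [-st, t^2], and let C be the trailing block of A
   on rows and columns k+1..n, of size m = n - k, so that H_(k+1) = det C and H_(k+2) = det C',
   where C' is the trailing block of C; C and C' are again in G_s([0,t]).  The expression is
   affine in X_k and in X_(k+1) separately, so it suffices to check the four vertices, using
   |det C| <= M_m, |det C'| <= M_(m-1), t M_(m-1) <= M_m (border a matrix of G_s^(m-1) by the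
   first row (t, 0, ..., 0)), and the key estimate t |det C - s det C'| <= t M_m + s^2 M_(m-1).
   For the latter expand det C along its first column: det C - s det C' = (c - s) det C' - s K
   is affine in the corner entry c of C, which ranges over [0,t]; at c = t it is the determinant
   of C with corner t - s, hence at most M_m, and at c = 0 it is at most 2 s M_(m-1). *)

lemma abs_affine_le_endpoints:
  fixes a b y lo hi T :: real
  assumes "lo \<le> y" "y \<le> hi" "\<bar>a + b * lo\<bar> \<le> T" "\<bar>a + b * hi\<bar> \<le> T"
  shows "\<bar>a + b * y\<bar> \<le> T"
proof (cases "0 \<le> b")
  case True
  then have "b * lo \<le> b * y" "b * y \<le> b * hi" using assms(1,2) by (auto intro: mult_left_mono)
  then show ?thesis using assms(3,4) by (simp add: abs_le_iff)
next
  case False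
  then have "b * y \<le> b * lo" "b * hi \<le> b * y" using assms(1,2) by (auto intro: mult_left_mono_neg)
  then show ?thesis using assms(3,4) by (simp add: abs_le_iff)
qed

lemma corner_estimate:
  fixes c s t H K P Q :: real
  assumes c: "0 \<le> c" "c \<le> t" and s: "0 \<le> s" "s \<le> t"
    and H: "\<bar>H\<bar> \<le> P" and K: "\<bar>K\<bar> \<le> P" and corner: "\<bar>(t - s) * H - s * K\<bar> \<le> Q"
    and PQ: "t * P \<le> Q"
  shows "t * \<bar>(c - s) * H - s * K\<bar> \<le> t * Q + s^2 * P"
proof -
  have P: "0 \<le> P" using H by linarith
  have "\<bar>(- s * H - s * K) + H * c\<bar> \<le> max Q (2 * s * P)"
  proof (rule abs_affine_le_endpoints[OF c])
    have "\<bar>- s * H - s * K\<bar> = s * \<bar>H + K\<bar>"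
    proof -
      have "- s * H - s * K = - (s * (H + K))" by (simp add: algebra_simps)
      then show ?thesis using s by (simp only: abs_minus_cancel abs_mult abs_of_nonneg)
    qed
    also have "\<dots> \<le> s * (2 * P)"
      using s H K abs_triangle_ineq[of H K] by (intro mult_left_mono) auto
    finally show "\<bar>(- s * H - s * K) + H * 0\<bar> \<le> max Q (2 * s * P)" by simp
    show "\<bar>(- s * H - s * K) + H * t\<bar> \<le> max Q (2 * s * P)"
      using corner by (simp add: algebra_simps)
  qed
  then have "t * \<bar>(c - s) * H - s * K\<bar> \<le> t * max Q (2 * s * P)"
    using s by (intro mult_left_mono) (auto simp: algebra_simps)
  also have "\<dots> \<le> t * Q + s^2 * P"
  proof (cases "2 * s * P \<le> Q")
    case True
    then show ?thesis using P by (simp add: max_def)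
  next
    case False
    have "0 \<le> (t - s)^2" by simp
    then have "2 * s * t \<le> t^2 + s^2" by (simp add: power2_diff algebra_simps)
    then have "2 * s * t * P \<le> (t^2 + s^2) * P" using P by (rule mult_right_mono)
    then have "t * (2 * s * P) \<le> t * (t * P) + s^2 * P" by (simp add: algebra_simps power2_eq_square)
    also have "t * (t * P) \<le> t * Q" using PQ s by (intro mult_left_mono) auto
    finally show ?thesis using False by (simp add: max_def)
  qed
  finally show ?thesis .
qed

lemma bilinear_estimate:
  fixes s t X Y H1 H2 P Q :: real
  assumes s: "0 \<le> s" "s \<le> t"
    and X: "- (s * t) \<le> X" "X \<le> t^2" and Y: "- (s * t) \<le> Y" "Y \<le> t^2"
    and H1: "\<bar>H1\<bar> \<le> Q" and H2: "\<bar>H2\<bar> \<le> P"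
    and diff: "t * \<bar>H1 - s * H2\<bar> \<le> t * Q + s^2 * P" and PQ: "t * P \<le> Q"
  shows "\<bar>X * H1 - Y * s * H2\<bar> \<le> t^2 * Q + t * s^2 * P"
proof -
  have t: "0 \<le> t" using s by linarith
  have P: "0 \<le> P" using H2 by linarith
  have "s * t \<le> t^2" using s t by (simp add: power2_eq_square mult_right_mono)
  then have absX: "\<bar>X\<bar> \<le> t^2" using X by (simp add: abs_le_iff)
  have "\<bar>X * H1 + (- s * H2) * Y\<bar> \<le> t^2 * Q + t * s^2 * P"
  proof (rule abs_affine_le_endpoints[OF Y])
    have "\<bar>X * H1 + (- s * H2) * (- (s * t))\<bar> \<le> \<bar>X\<bar> * \<bar>H1\<bar> + t * s^2 * \<bar>H2\<bar>"
      using abs_triangle_ineq[of "X * H1" "t * s^2 * H2"] s t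
      by (simp add: abs_mult power2_eq_square algebra_simps)
    also have "\<dots> \<le> t^2 * Q + t * s^2 * P"
      using absX H1 H2 P s t by (intro add_mono mult_mono mult_left_mono) auto
    finally show "\<bar>X * H1 + (- s * H2) * (- (s * t))\<bar> \<le> t^2 * Q + t * s^2 * P" .
  next
    have "\<bar>(- (s * t^2) * H2) + H1 * X\<bar> \<le> t^2 * Q + t * s^2 * P"
    proof (rule abs_affine_le_endpoints[OF X])
      have "\<bar>(- (s * t^2) * H2) + H1 * (- (s * t))\<bar> \<le> s * t^2 * \<bar>H2\<bar> + s * t * \<bar>H1\<bar>"
        using abs_triangle_ineq[of "s * t^2 * H2" "s * t * H1"] s t
        by (simp add: abs_mult algebra_simps)
      also have "\<dots> \<le> s * t^2 * P + s * t * Q"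
        using H1 H2 s t by (intro add_mono mult_left_mono) auto
      also have "\<dots> \<le> t^2 * Q + t * s^2 * P"
      proof -
        have "s * P \<le> Q" using PQ P s by (meson mult_right_mono order_trans)
        then have "0 \<le> t * (t - s) * (Q - s * P)" using s t by simp
        then show ?thesis by (simp add: algebra_simps power2_eq_square)
      qed
      finally show "\<bar>(- (s * t^2) * H2) + H1 * (- (s * t))\<bar> \<le> t^2 * Q + t * s^2 * P" .
    next
      have "(- (s * t^2) * H2) + H1 * t^2 = t * (t * (H1 - s * H2))"
        by (simp add: algebra_simps power2_eq_square)
      then have "\<bar>(- (s * t^2) * H2) + H1 * t^2\<bar> = t * (t * \<bar>H1 - s * H2\<bar>)"
        using t by (simp add: abs_mult)
      also have "\<dots> \<le> t * (t * Q + s^2 * P)" using diff t by (rule mult_left_mono)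
      finally show "\<bar>(- (s * t^2) * H2) + H1 * t^2\<bar> \<le> t^2 * Q + t * s^2 * P"
        by (simp add: algebra_simps power2_eq_square)
    qed
    then show "\<bar>X * H1 + (- s * H2) * t^2\<bar> \<le> t^2 * Q + t * s^2 * P"
      by (simp add: algebra_simps)
  qed
  then show ?thesis by (simp add: algebra_simps)
qed

definition trailing :: "nat \<Rightarrow> (nat \<Rightarrow> nat \<Rightarrow> real) \<Rightarrow> nat \<Rightarrow> nat \<Rightarrow> real" where
  "trailing k B = (\<lambda>i j. B (i + k) (j + k))"

definition minor21 :: "(nat \<Rightarrow> nat \<Rightarrow> real) \<Rightarrow> nat \<Rightarrow> nat \<Rightarrow> real" where
  "minor21 B = (\<lambda>i j. if i = 1 then B 1 (j + 1) else B (i + 1) (j + 1))"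

definition border :: "real \<Rightarrow> real \<Rightarrow> (nat \<Rightarrow> nat \<Rightarrow> real) \<Rightarrow> nat \<Rightarrow> nat \<Rightarrow> real" where
  "border s x B = (\<lambda>i j. if i = 1 then (if j = 1 then x else 0)
                         else if j = 1 then (if i = 2 then s else 0) else B (i - 1) (j - 1))"

lemma trailing_trailing [simp]: "trailing i (trailing j B) = trailing (i + j) B"
  by (simp add: trailing_def ac_simps)

lemma detn_0 [simp]: "detn 0 B = 1"
  unfolding detn_def det_def by simp

lemma detn_1: "detn 1 B = B 1 1"
  unfolding detn_def by (subst det_single) auto

lemma detn_cong:
  assumes "\<And>i j. 1 \<le> i \<Longrightarrow> i \<le> m \<Longrightarrow> 1 \<le> j \<Longrightarrow> j \<le> m \<Longrightarrow> B i j = C i j"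
  shows "detn m B = detn m C"
  unfolding detn_def by (rule arg_cong[where f = det], rule eq_matI) (auto simp: assms)

lemma Hk_eq_detn_trailing:
  assumes "1 \<le> j" "j \<le> n + 1"
  shows "Hk n A j = detn (n + 1 - j) (trailing (j - 1) A)"
proof -
  have "(\<lambda>i l. A (i + j - 1) (l + j - 1)) = trailing (j - 1) A"
    using assms(1) by (auto simp: trailing_def)
  then show ?thesis by (simp add: Hk_def)
qed

lemma detn_hessenberg_expansion:
  assumes m: "2 \<le> m" and b21: "B 2 1 = s" and below: "\<And>i. 3 \<le> i \<Longrightarrow> i \<le> m \<Longrightarrow> B i 1 = 0"
  shows "detn m B = B 1 1 * detn (m - 1) (trailing 1 B) - s * detn (m - 1) (minor21 B)"
proof -
  let ?M = "mat m m (\<lambda>(i, j). B (i + 1) (j + 1))"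
  have "det ?M = (\<Sum>i<m. ?M $$ (i, 0) * cofactor ?M i 0)"
    by (rule laplace_expansion_column) (use m in auto)
  also have "\<dots> = (\<Sum>i\<in>{0, 1}. ?M $$ (i, 0) * cofactor ?M i 0)"
    by (rule sum.mono_neutral_right) (use m below in auto)
  also have "\<dots> = B 1 1 * det (mat_delete ?M 0 0) - s * det (mat_delete ?M 1 0)"
    using m b21 by (simp add: cofactor_def numeral_2_eq_2)
  also have "mat_delete ?M 0 0 = mat (m - 1) (m - 1) (\<lambda>(i, j). trailing 1 B (i + 1) (j + 1))"
    unfolding mat_delete_def trailing_def by (rule eq_matI) auto
  also have "mat_delete ?M 1 0 = mat (m - 1) (m - 1) (\<lambda>(i, j). minor21 B (i + 1) (j + 1))"
    unfolding mat_delete_def minor21_def by (rule eq_matI) auto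
  finally show ?thesis unfolding detn_def .
qed

lemma detn_first_row_unit:
  assumes m: "1 \<le> m" and row: "\<And>j. 2 \<le> j \<Longrightarrow> j \<le> m \<Longrightarrow> B 1 j = 0"
  shows "detn m B = B 1 1 * detn (m - 1) (trailing 1 B)"
proof -
  let ?M = "mat m m (\<lambda>(i, j). B (i + 1) (j + 1))"
  have "det ?M = (\<Sum>j<m. ?M $$ (0, j) * cofactor ?M 0 j)"
    by (rule laplace_expansion_row) (use m in auto)
  also have "\<dots> = (\<Sum>j\<in>{0}. ?M $$ (0, j) * cofactor ?M 0 j)"
    by (rule sum.mono_neutral_right) (use m row in auto)
  also have "\<dots> = B 1 1 * det (mat_delete ?M 0 0)"
    using m by (simp add: cofactor_def)
  also have "mat_delete ?M 0 0 = mat (m - 1) (m - 1) (\<lambda>(i, j). trailing 1 B (i + 1) (j + 1))"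
    unfolding mat_delete_def trailing_def by (rule eq_matI) auto
  finally show ?thesis unfolding detn_def .
qed

lemma hessG_D:
  assumes "hessG s n P A" "1 \<le> i" "i \<le> n" "1 \<le> j" "j \<le> n"
  shows "(i = j + 1 \<longrightarrow> A i j = s) \<and> (i > j + 1 \<longrightarrow> A i j = 0) \<and> (i \<le> j \<longrightarrow> A i j \<in> P)"
  using assms unfolding hessG_def by auto

lemma hessG_first_column:
  assumes "hessG s m P B" "2 \<le> m"
  shows "B 2 1 = s" "\<And>i. 3 \<le> i \<Longrightarrow> i \<le> m \<Longrightarrow> B i 1 = 0"
  using hessG_D[OF assms(1), of 2 1] hessG_D[OF assms(1), of _ 1] assms(2) by auto

lemma hessG_subdiagonal: "0 \<in> P \<Longrightarrow> hessG s m P (\<lambda>i j. if i = j + 1 then s else 0)"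
  unfolding hessG_def by auto

lemma hessG_trailing:
  assumes "hessG s n P A"
  shows "hessG s (n - k) P (trailing k A)"
  unfolding hessG_def trailing_def
proof (intro ballI)
  fix i j assume "i \<in> {1..n - k}" "j \<in> {1..n - k}"
  then show "(i = j + 1 \<longrightarrow> A (i + k) (j + k) = s) \<and> (i > j + 1 \<longrightarrow> A (i + k) (j + k) = 0)
      \<and> (i \<le> j \<longrightarrow> A (i + k) (j + k) \<in> P)"
    using hessG_D[OF assms, of "i + k" "j + k"] by auto
qed

lemma hessG_minor21:
  assumes "hessG s m P B"
  shows "hessG s (m - 1) P (minor21 B)"
  unfolding hessG_def minor21_def
proof (intro ballI)
  fix i j assume ij: "i \<in> {1..m - 1}" "j \<in> {1..m - 1}"
  show "(i = j + 1 \<longrightarrow> (if i = 1 then B 1 (j + 1) else B (i + 1) (j + 1)) = s)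
      \<and> (i > j + 1 \<longrightarrow> (if i = 1 then B 1 (j + 1) else B (i + 1) (j + 1)) = 0)
      \<and> (i \<le> j \<longrightarrow> (if i = 1 then B 1 (j + 1) else B (i + 1) (j + 1)) \<in> P)"
  proof (cases "i = 1")
    case True
    then show ?thesis using ij hessG_D[OF assms, of 1 "j + 1"] by auto
  next
    case False
    have "1 \<le> i + 1" "i + 1 \<le> m" "1 \<le> j + 1" "j + 1 \<le> m" using ij by auto
    from hessG_D[OF assms this] False show ?thesis by auto
  qed
qed

lemma hessG_corner_update:
  assumes "hessG s m P B" "x \<in> P"
  shows "hessG s m P (B(1 := (B 1)(1 := x)))"
  using assms unfolding hessG_def by auto

lemma hessG_border:
  assumes "hessG s m P B" "0 \<in> P" "x \<in> P"
  shows "hessG s (Suc m) P (border s x B)"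
  unfolding hessG_def
proof (intro ballI)
  fix i j assume ij: "i \<in> {1..Suc m}" "j \<in> {1..Suc m}"
  show "(i = j + 1 \<longrightarrow> border s x B i j = s) \<and> (i > j + 1 \<longrightarrow> border s x B i j = 0)
      \<and> (i \<le> j \<longrightarrow> border s x B i j \<in> P)"
  proof (cases "i = 1 \<or> j = 1")
    case True
    then show ?thesis using ij assms(2,3) by (auto simp: border_def)
  next
    case False
    then have "border s x B i j = B (i - 1) (j - 1)" by (simp add: border_def)
    moreover have "(i = j + 1) = (i - 1 = (j - 1) + 1)" "(i > j + 1) = (i - 1 > (j - 1) + 1)"
      "(i \<le> j) = (i - 1 \<le> j - 1)"
      using False ij by auto
    ultimately show ?thesis using hessG_D[OF assms(1), of "i - 1" "j - 1"] False ij by auto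
  qed
qed

lemma detn_border:
  assumes "hessG s m P B"
  shows "detn (Suc m) (border s x B) = x * detn m B"
proof -
  have "detn (Suc m) (border s x B) = x * detn m (trailing 1 (border s x B))"
    by (subst detn_first_row_unit) (auto simp: border_def)
  also have "detn m (trailing 1 (border s x B)) = detn m B"
    by (rule detn_cong) (auto simp: trailing_def border_def)
  finally show ?thesis .
qed

lemma abs_detn_le_power:
  assumes "hessG s m {0..t} B" "0 \<le> s"
  shows "\<bar>detn m B\<bar> \<le> (s + t) ^ m"
  using assms(1)
proof (induction m arbitrary: B rule: less_induct)
  case (less m)
  have B11: "0 \<le> B 1 1" "B 1 1 \<le> t" if "1 \<le> m"
    using hessG_D[OF less.prems, of 1 1] that by auto
  consider "m = 0" | "m = 1" | "2 \<le> m" by linarith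
  then show ?case
  proof cases
    case 1
    then show ?thesis by simp
  next
    case 2
    then show ?thesis using B11 assms(2) detn_1[of B] by simp
  next
    case 3
    have expand: "detn m B = B 1 1 * detn (m - 1) (trailing 1 B) - s * detn (m - 1) (minor21 B)"
      by (rule detn_hessenberg_expansion) (use 3 hessG_first_column[OF less.prems] in auto)
    have IH: "\<bar>detn (m - 1) (trailing 1 B)\<bar> \<le> (s + t) ^ (m - 1)"
      "\<bar>detn (m - 1) (minor21 B)\<bar> \<le> (s + t) ^ (m - 1)"
      using 3 less.IH hessG_trailing[OF less.prems, of 1] hessG_minor21[OF less.prems] by auto
    have "\<bar>detn m B\<bar> \<le> B 1 1 * \<bar>detn (m - 1) (trailing 1 B)\<bar> + s * \<bar>detn (m - 1) (minor21 B)\<bar>"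
      unfolding expand using 3 B11 assms(2)
        abs_triangle_ineq4[of "B 1 1 * detn (m - 1) (trailing 1 B)" "s * detn (m - 1) (minor21 B)"]
      by (simp add: abs_mult)
    also have "\<dots> \<le> t * (s + t) ^ (m - 1) + s * (s + t) ^ (m - 1)"
      using 3 B11 assms(2) IH by (intro add_mono mult_mono) auto
    also have "\<dots> = (s + t) ^ m"
      using 3 by (simp add: power_eq_if algebra_simps)
    finally show ?thesis .
  qed
qed

lemma abs_detn_le_Mmax:
  assumes "hessG s m {0..t} B" "0 \<le> s"
  shows "\<bar>detn m B\<bar> \<le> Mmax s t m"
proof (cases "m = 0")
  case False
  have "bdd_above {\<bar>detn m B\<bar> | B. hessG s m {0..t} B}"
    using abs_detn_le_power[OF _ assms(2)] by (auto intro!: bdd_aboveI)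
  then show ?thesis using False assms(1) unfolding Mmax_def by (auto intro!: cSup_upper)
qed (simp add: Mmax_def)

lemma Mmax_nonneg:
  assumes "0 \<le> s" "0 \<le> t"
  shows "0 \<le> Mmax s t m"
  using abs_detn_le_Mmax[OF hessG_subdiagonal[of "{0..t}" s m] assms(1)] assms(2) by auto

lemma Mmax_eq_Sup:
  assumes "0 \<le> t"
  shows "Mmax s t m = Sup {\<bar>detn m B\<bar> | B. hessG s m {0..t} B}"
proof (cases "m = 0")
  case True
  then have "{\<bar>detn m B\<bar> | B. hessG s m {0..t} B} = {1}"
    using hessG_subdiagonal[of "{0..t}" s m] assms by auto
  then show ?thesis using True by (simp add: Mmax_def)
qed (simp add: Mmax_def)

lemma mult_Mmax_pred_le_Mmax:
  assumes s: "0 \<le> s" and t: "0 \<le> t" and m: "1 \<le> m"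
  shows "t * Mmax s t (m - 1) \<le> Mmax s t m"
proof (cases "t = 0")
  case True
  then show ?thesis using Mmax_nonneg[OF s t] by simp
next
  case False
  with t have t: "0 < t" by simp
  obtain l where l: "m = Suc l" using m by (cases m) auto
  let ?S = "{\<bar>detn l B\<bar> | B. hessG s l {0..t} B}"
  have "Sup ?S \<le> Mmax s t m / t"
  proof (rule cSup_least)
    show "?S \<noteq> {}" using hessG_subdiagonal[of "{0..t}" s l] t by auto
  next
    fix y assume "y \<in> ?S"
    then obtain B where y: "y = \<bar>detn l B\<bar>" and B: "hessG s l {0..t} B" by blast
    have "t * \<bar>detn l B\<bar> = \<bar>detn m (border s t B)\<bar>"
      using detn_border[OF B] t l by (simp add: abs_mult)
    also have "\<dots> \<le> Mmax s t m"
      using abs_detn_le_Mmax[OF hessG_border[OF B] s] t l by auto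
    finally show "y \<le> Mmax s t m / t"
      using t unfolding y by (simp add: pos_le_divide_eq mult.commute)
  qed
  then show ?thesis
    using t l Mmax_eq_Sup[of t s l] by (simp add: pos_le_divide_eq mult.commute)
qed

lemma detn_corner_update:
  assumes B: "hessG s m {0..t} B" and m: "1 \<le> m" and s: "0 \<le> s"
  obtains K where "\<bar>K\<bar> \<le> Mmax s t (m - 1)"
    and "\<And>x. detn m (B(1 := (B 1)(1 := x))) = x * detn (m - 1) (trailing 1 B) - s * K"
proof (cases "m = 1")
  case True
  show ?thesis
  proof (rule that[of 0])
    show "\<bar>0\<bar> \<le> Mmax s t (m - 1)" using True by (simp add: Mmax_def)
  next
    fix x
    show "detn m (B(1 := (B 1)(1 := x))) = x * detn (m - 1) (trailing 1 B) - s * 0"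
      using True detn_1[of "B(1 := (B 1)(1 := x))"] by simp
  qed
next
  case False
  with m have m2: "2 \<le> m" by simp
  show ?thesis
  proof (rule that[of "detn (m - 1) (minor21 B)"])
    show "\<bar>detn (m - 1) (minor21 B)\<bar> \<le> Mmax s t (m - 1)"
      by (rule abs_detn_le_Mmax[OF hessG_minor21[OF B] s])
  next
    fix x
    let ?B = "B(1 := (B 1)(1 := x))"
    have "detn m ?B = ?B 1 1 * detn (m - 1) (trailing 1 ?B) - s * detn (m - 1) (minor21 ?B)"
      by (rule detn_hessenberg_expansion) (use m2 hessG_first_column[OF B m2] in auto)
    also have "detn (m - 1) (trailing 1 ?B) = detn (m - 1) (trailing 1 B)"
      by (rule detn_cong) (auto simp: trailing_def)
    also have "detn (m - 1) (minor21 ?B) = detn (m - 1) (minor21 B)"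
      by (rule detn_cong) (auto simp: minor21_def)
    finally show "detn m ?B = x * detn (m - 1) (trailing 1 B) - s * detn (m - 1) (minor21 B)"
      by (simp only: fun_upd_same)
  qed
qed

lemma abs_detn_minus_trailing_bound:
  assumes C: "hessG s m {0..t} C" and m: "1 \<le> m" and s: "0 \<le> s" "s \<le> t"
  shows "t * \<bar>detn m C - s * detn (m - 1) (trailing 1 C)\<bar>
    \<le> t * Mmax s t m + s^2 * Mmax s t (m - 1)"
proof -
  let ?H = "detn (m - 1) (trailing 1 C)"
  obtain K where K: "\<bar>K\<bar> \<le> Mmax s t (m - 1)"
    and corner: "\<And>x. detn m (C(1 := (C 1)(1 := x))) = x * ?H - s * K"
    using detn_corner_update[OF C m s(1)] by blast
  have c: "0 \<le> C 1 1" "C 1 1 \<le> t" using hessG_D[OF C, of 1 1] m by auto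
  have "detn m C = C 1 1 * ?H - s * K" using corner[of "C 1 1"] by simp
  then have diff: "detn m C - s * ?H = (C 1 1 - s) * ?H - s * K" by (simp add: algebra_simps)
  have "\<bar>?H\<bar> \<le> Mmax s t (m - 1)"
    using abs_detn_le_Mmax[OF hessG_trailing[OF C, of 1] s(1)] by simp
  moreover have "\<bar>(t - s) * ?H - s * K\<bar> \<le> Mmax s t m"
    using abs_detn_le_Mmax[OF hessG_corner_update[OF C, of "t - s"] s(1)] corner[of "t - s"] s
    by auto
  moreover have "t * Mmax s t (m - 1) \<le> Mmax s t m"
    using mult_Mmax_pred_le_Mmax[OF s(1) _ m] s by simp
  ultimately show ?thesis unfolding diff by (rule corner_estimate[OF c s _ K])
qed

lemma first_rows_combination_bounds:
  assumes A: "hessG s n {0..t} A" and s: "0 \<le> s" and j: "2 \<le> j" "j \<le> n"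
  shows "- (s * t) \<le> A 1 1 * A 2 j - s * A 1 j" "A 1 1 * A 2 j - s * A 1 j \<le> t^2"
proof -
  have a11: "0 \<le> A 1 1" "A 1 1 \<le> t" and a1j: "0 \<le> A 1 j" "A 1 j \<le> t"
    and a2j: "0 \<le> A 2 j" "A 2 j \<le> t"
    using hessG_D[OF A, of 1 1] hessG_D[OF A, of 1 j] hessG_D[OF A, of 2 j] j by auto
  have "s * A 1 j \<le> s * t" using a1j(2) s by (rule mult_left_mono)
  moreover have "0 \<le> A 1 1 * A 2 j" using a11 a2j by simp
  ultimately show "- (s * t) \<le> A 1 1 * A 2 j - s * A 1 j" by linarith
  have "A 1 1 * A 2 j \<le> t * t" using a11 a2j by (intro mult_mono) auto
  moreover have "0 \<le> s * A 1 j" using a1j s by simp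
  ultimately show "A 1 1 * A 2 j - s * A 1 j \<le> t^2" by (simp add: power2_eq_square)
qed

theorem lemma3p2:
  fixes s t :: real and n :: nat and A :: "nat \<Rightarrow> nat \<Rightarrow> real"
  assumes "s > 0" and "t \<ge> s" and "n \<ge> 3"
    and "hessG s n {0..t} A"
  shows "(\<forall>k\<in>{2..n-1}.
            \<bar>(A 1 1 * A 2 k - s * A 1 k) * Hk n A (k + 1)
               - (A 1 1 * A 2 (k + 1) - s * A 1 (k + 1)) * s * Hk n A (k + 2)\<bar>
            \<le> t^2 * Mmax s t (n - k) + t * s^2 * Mmax s t (n - k - 1))
         \<and> (even n \<longrightarrow> \<bar>(A 1 1 * A 2 n - s * A 1 n) * Hk n A (n + 1)\<bar> \<le> t^2 * Mmax s t 0)"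
proof (intro conjI ballI impI)
  have s: "0 \<le> s" "s \<le> t" using assms(1,2) by auto
  then have t: "0 \<le> t" by linarith
  note row = first_rows_combination_bounds[OF assms(4) s(1)]
  fix k assume k: "k \<in> {2..n-1}"
  let ?C = "trailing k A"
  have C: "hessG s (n - k) {0..t} ?C" by (rule hessG_trailing[OF assms(4)])
  have k2: "2 \<le> k" and kn: "k + 1 \<le> n" and m: "1 \<le> n - k" using k assms(3) by auto
  have "Hk n A (k + 1) = detn (n - k) ?C" "Hk n A (k + 2) = detn (n - k - 1) (trailing 1 ?C)"
    using k Hk_eq_detn_trailing[of "k + 1" n A] Hk_eq_detn_trailing[of "k + 2" n A] by auto
  moreover have "t * Mmax s t (n - k - 1) \<le> Mmax s t (n - k)"
    by (rule mult_Mmax_pred_le_Mmax[OF s(1) t m])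
  ultimately show "\<bar>(A 1 1 * A 2 k - s * A 1 k) * Hk n A (k + 1)
      - (A 1 1 * A 2 (k + 1) - s * A 1 (k + 1)) * s * Hk n A (k + 2)\<bar>
    \<le> t^2 * Mmax s t (n - k) + t * s^2 * Mmax s t (n - k - 1)"
    using row[OF k2] row[of "k + 1"] k2 kn abs_detn_le_Mmax[OF C s(1)]
      abs_detn_le_Mmax[OF hessG_trailing[OF C, of 1] s(1)]
      abs_detn_minus_trailing_bound[OF C m s]
    by (intro bilinear_estimate[OF s]) auto
next
  have s: "0 \<le> s" "s \<le> t" using assms(1,2) by auto
  then have "s * t \<le> t^2" by (simp add: power2_eq_square mult_right_mono)
  then have "\<bar>A 1 1 * A 2 n - s * A 1 n\<bar> \<le> t^2"
    using first_rows_combination_bounds[OF assms(4) s(1), of n] assms(3) by (simp add: abs_le_iff)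
  then show "\<bar>(A 1 1 * A 2 n - s * A 1 n) * Hk n A (n + 1)\<bar> \<le> t^2 * Mmax s t 0"
    by (simp add: Hk_def Mmax_def)
qed

end
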